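(* Let $\gamma\in(1,3)$ and $\mu\in(0,1)$. At the point $B=(U_B,H_B)=(1,0)$ there exist two distinct branches of integral curves of $\frac{dH}{dU}=\frac{F(H,U)}{G(H,U)}$, with slopes $C_1(U_B,H_B)=0$ and $C_2(U_B,H_B)=\frac{\gamma(1-\mu)}{1+k_2}$. Moreover, there exists exactly one integral curve passing through $B$ along each of these branches, both integral curves are smooth at $B$, and the integral curve corresponding to the slope $0$ is precisely $H\equiv0$.
   Context: $k_1=\frac{(\gamma+1)+\mu(3-\gamma)}{2}$, $k_2=\frac{2(1-\mu)}{\gamma-1}$, $F(H,U)=2H[H-(U^2-k_1U+\mu)]$, $G(H,U)=H(U+k_2)-U(U-1)(U-\mu)$. Integral curves through $B$ are trajectories of $\frac{dH}{ds}=F$, $\frac{dU}{ds}=G$ converging to the equilibrium $B$ (where $F=G=0$ and $(U-1)^2-H=0$). *)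

theory Defs
  imports "HOL-Analysis.Analysis"
begin

definition k1 :: "real \<Rightarrow> real \<Rightarrow> real" where
  "k1 \<gamma> \<mu> = ((\<gamma> + 1) + \<mu> * (3 - \<gamma>)) / 2"

definition k2 :: "real \<Rightarrow> real \<Rightarrow> real" where
  "k2 \<gamma> \<mu> = 2 * (1 - \<mu>) / (\<gamma> - 1)"

definition F :: "real \<Rightarrow> real \<Rightarrow> real \<Rightarrow> real \<Rightarrow> real" where
  "F \<gamma> \<mu> H U = 2 * H * (H - (U^2 - k1 \<gamma> \<mu> * U + \<mu>))"

definition G :: "real \<Rightarrow> real \<Rightarrow> real \<Rightarrow> real \<Rightarrow> real" where
  "G \<gamma> \<mu> H U = H * (U + k2 \<gamma> \<mu>) - U * (U - 1) * (U - \<mu>)"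

definition integral_curve_B :: "real \<Rightarrow> real \<Rightarrow> (real \<Rightarrow> real) \<Rightarrow> real \<Rightarrow> real \<Rightarrow> bool" where
  "integral_curve_B \<gamma> \<mu> h a b \<longleftrightarrow>
     a < 1 \<and> 1 < b \<and> h 1 = 0 \<and>
     (\<forall>U \<in> {a<..<b} - {1}. G \<gamma> \<mu> (h U) U \<noteq> 0 \<and>
        (h has_real_derivative (F \<gamma> \<mu> (h U) U / G \<gamma> \<mu> (h U) U)) (at U))"

definition smooth_on_real :: "real set \<Rightarrow> (real \<Rightarrow> real) \<Rightarrow> bool" where
  "smooth_on_real S h \<longleftrightarrow> (\<forall>n. \<forall>x \<in> S. ((deriv ^^ n) h) differentiable (at x))"

end

(*
  Near B = (1, 0) write u = U - 1. Then G(H,U)/u tends to (1 + k2) H'(1) - (1 - mu) along a curve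
  through B, and the equation becomes an analytic equation of Briot-Bouquet type in u.

  Existence: for the slope gamma (1 - mu) / (1 + k2) a formal power series solution is obtained by
  comparing coefficients; an induction bounds the n-th coefficient by eps R^(n-1) / n^2, the
  1/n^2 surviving the convolutions because sum_k 1/(k^2 (N-k)^2) <= 8/N^2. So the series converges
  near 0 and gives a smooth integral curve.

  Uniqueness: for two integral curves f, h through B with the same slope s other than
  (1 - mu) / (1 + k2), (f - h)' = (f - h) Z / (U - 1) with Z tending to a negative limit. Hence
  (f - h)^2 decreases as U moves away from 1 and vanishes at 1, so f = h near B.
*)
theory Submission
  imports Defs
begin

section \<open>Estimates for the coefficient recurrence\<close>

lemma sum_inverse_squares_le: "(\<Sum>k=1..N. 1 / (real k)^2) \<le> 2 - 1 / real N"
proof (induction N)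
  case (Suc N)
  show ?case
  proof (cases "N = 0")
    case False
    have "1 / (real (Suc N))^2 \<le> 1 / (real N * real (Suc N))"
      using False by (intro divide_left_mono) (auto simp: power2_eq_square)
    also have "\<dots> = 1 / real N - 1 / real (Suc N)"
      using False by (simp add: field_simps)
    finally show ?thesis using Suc.IH by simp
  qed simp
qed simp

lemma inverse_square_product_le:
  fixes i j :: real
  assumes "0 < i" "0 < j"
  shows "1 / (i^2 * j^2) \<le> 2 / (i + j)^2 * (1 / i^2 + 1 / j^2)"
proof -
  have "(i + j)^2 \<le> 2 * (i^2 + j^2)"
    using sum_squares_ge_zero[of "i - j" 0] by (simp add: power2_eq_square algebra_simps)
  then show ?thesis
    using assms by (simp add: field_simps)
qed

lemma convolution_inverse_squares_le:
  assumes "A \<subseteq> {1..<N}"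
  shows "(\<Sum>k\<in>A. 1 / ((real k)^2 * (real (N - k))^2)) \<le> 8 / (real N)^2"
proof -
  have inj: "inj_on (\<lambda>k. N - k) A"
    using assms by (intro inj_onI) (metis atLeastLessThan_iff diff_diff_cancel less_imp_le_nat subsetD)
  have sub: "A \<subseteq> {1..N}" "(\<lambda>k. N - k) ` A \<subseteq> {1..N}"
    using assms by (auto simp: subset_iff)
  have "(\<Sum>k\<in>A. 1 / ((real k)^2 * (real (N - k))^2))
      \<le> (\<Sum>k\<in>A. 2 / (real N)^2 * (1 / (real k)^2 + 1 / (real (N - k))^2))"
  proof (rule sum_mono)
    fix k assume "k \<in> A"
    then have "0 < k" "k < N" using assms by auto
    then show "1 / ((real k)^2 * (real (N - k))^2) \<le> 2 / (real N)^2 * (1 / (real k)^2 + 1 / (real (N - k))^2)"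
      using inverse_square_product_le[of "real k" "real (N - k)"] by (simp add: of_nat_diff)
  qed
  also have "\<dots> = 2 / (real N)^2 * ((\<Sum>k\<in>A. 1 / (real k)^2) + (\<Sum>j\<in>(\<lambda>k. N - k) ` A. 1 / (real j)^2))"
    by (simp only: distrib_left sum_distrib_left sum.distrib sum.reindex[OF inj] o_def)
  also have "\<dots> \<le> 2 / (real N)^2 * ((\<Sum>k=1..N. 1 / (real k)^2) + (\<Sum>k=1..N. 1 / (real k)^2))"
    using sub by (intro mult_left_mono add_mono sum_mono2) auto
  also have "\<dots> \<le> 2 / (real N)^2 * (2 + 2)"
  proof -
    have "0 \<le> 1 / real N" by simp
    then have "(\<Sum>k=1..N. 1 / (real k)^2) \<le> 2"
      using sum_inverse_squares_le[of N] by linarith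
    then show ?thesis by (intro mult_left_mono add_mono) auto
  qed
  finally show ?thesis by simp
qed

lemma convolution_le:
  fixes y :: "nat \<Rightarrow> real"
  assumes A: "A \<subseteq> {1..<N}" and sym: "\<And>k. k \<in> A \<Longrightarrow> N - k \<in> A"
    and bound: "\<And>k. k \<in> A \<Longrightarrow> \<bar>y k\<bar> \<le> C * R^(k - 1) / (real k)^2" and "0 \<le> R"
  shows "\<bar>\<Sum>k\<in>A. y k * y (N - k)\<bar> \<le> 8 * C^2 * R^(N - 2) / (real N)^2"
proof -
  have "\<bar>\<Sum>k\<in>A. y k * y (N - k)\<bar> \<le> (\<Sum>k\<in>A. \<bar>y k\<bar> * \<bar>y (N - k)\<bar>)"
    by (rule order_trans[OF sum_abs]) (simp add: abs_mult)
  also have "\<dots> \<le> (\<Sum>k\<in>A. (C * R^(k - 1) / (real k)^2) * (C * R^(N - k - 1) / (real (N - k))^2))"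
    using bound abs_ge_zero order_trans by (intro sum_mono mult_mono bound sym) blast+
  also have "\<dots> = (\<Sum>k\<in>A. C^2 * R^(N - 2) * (1 / ((real k)^2 * (real (N - k))^2)))"
  proof (rule sum.cong)
    fix k assume "k \<in> A"
    then have "R^(k - 1) * R^(N - k - 1) = R^(N - 2)"
      using A by (subst power_add[symmetric]) (auto intro!: arg_cong[where f="power R"])
    then show "(C * R^(k - 1) / (real k)^2) * (C * R^(N - k - 1) / (real (N - k))^2)
        = C^2 * R^(N - 2) * (1 / ((real k)^2 * (real (N - k))^2))"
      by (simp add: power2_eq_square field_simps)
  qed simp
  also have "\<dots> = C^2 * R^(N - 2) * (\<Sum>k\<in>A. 1 / ((real k)^2 * (real (N - k))^2))"
    by (simp add: sum_distrib_left)
  also have "\<dots> \<le> C^2 * R^(N - 2) * (8 / (real N)^2)"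
    using assms by (intro mult_left_mono convolution_inverse_squares_le) auto
  finally show ?thesis by (simp add: field_simps)
qed

lemma shifted_term_le:
  assumes "1 \<le> j" "j < n" "1 \<le> R" "0 \<le> K"
    and c: "\<bar>c\<bar> \<le> C * real n"
    and v: "\<bar>v\<bar> \<le> K * R^(n - j - 1) / (real (n - j))^2"
  shows "\<bar>c * v\<bar> \<le> (real j + 1)^2 * C * K * R^(n - 2) / real n"
proof -
  have "0 \<le> C * real n" using c abs_ge_zero order_trans by blast
  then have C: "0 \<le> C" using assms by (simp add: zero_le_mult_iff)
  have ratio: "real n / (real (n - j))^2 \<le> (real j + 1)^2 / real n"
  proof -
    define d where "d = real (n - j)"
    have d: "0 < d" "d = real n - real j" using assms by (auto simp: d_def)
    have "real n \<le> (real j + 1) * d"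
    proof -
      have "real j * (real n - real j - 1) \<ge> 0" using assms by simp
      then show ?thesis unfolding d(2) by (simp add: algebra_simps)
    qed
    then have "real n * real n \<le> ((real j + 1) * d) * ((real j + 1) * d)"
      by (intro mult_mono) auto
    then show ?thesis using d(1) assms unfolding d_def[symmetric] by (simp add: field_simps power2_eq_square)
  qed
  have "\<bar>c * v\<bar> \<le> C * real n * (K * R^(n - 2) / (real (n - j))^2)"
  proof -
    have "R^(n - j - 1) \<le> R^(n - 2)" using assms by (intro power_increasing) auto
    then have "K * R^(n - j - 1) / (real (n - j))^2 \<le> K * R^(n - 2) / (real (n - j))^2"
      using assms by (intro divide_right_mono mult_left_mono) auto
    then show ?thesis unfolding abs_mult using c v by (intro mult_mono) auto
  qed
  also have "\<dots> = C * K * R^(n - 2) * (real n / (real (n - j))^2)" by simp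
  also have "\<dots> \<le> C * K * R^(n - 2) * ((real j + 1)^2 / real n)"
    using C assms ratio by (intro mult_left_mono) auto
  finally show ?thesis by (simp add: ac_simps)
qed

text \<open>Comparing coefficients of \<open>u\<^sup>n\<close> in the equation of \<open>singular_ode\<close>, the terms
  containing \<open>y\<^sub>n\<close> add up to \<open>(n a + p0) y\<^sub>n\<close> because \<open>\<kappa> y\<^sub>1 = a + p0\<close>;
  \<open>recurrence_rhs\<close> is minus the sum of all other terms.\<close>

definition recurrence_rhs :: "real \<Rightarrow> real \<Rightarrow> real \<Rightarrow> (nat \<Rightarrow> real) \<Rightarrow> nat \<Rightarrow> real" where
  "recurrence_rhs \<kappa> p1 \<beta> y n =
     - \<kappa> * (real n + 1) / 2 * (\<Sum>k=2..n-1. y k * y (n + 1 - k))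
     - (real n / 2 - 2) * (\<Sum>k=1..n-1. y k * y (n - k))
     + (p1 * (real n - 1) - 2 * \<beta>) * y (n - 1) + (real n - 4) * y (n - 2)"

lemma recurrence_quadratic_term_le:
  fixes y :: "nat \<Rightarrow> real"
  assumes n: "2 \<le> n" and "0 < \<kappa>" "0 < \<epsilon>" "1 \<le> R" "8 * \<kappa> * \<epsilon> \<le> a"
    and coeffs: "\<And>k. 2 \<le> k \<Longrightarrow> k < n \<Longrightarrow> \<bar>y k\<bar> \<le> \<epsilon> * R^(k - 1) / (real k)^2"
  shows "\<bar>- \<kappa> * (real n + 1) / 2 * (\<Sum>k=2..n-1. y k * y (n + 1 - k))\<bar> \<le> a / 2 * \<epsilon> * R^(n - 1) / real n"
proof -
  have "\<bar>\<Sum>k=2..n-1. y k * y (n + 1 - k)\<bar> \<le> 8 * \<epsilon>^2 * R^(n + 1 - 2) / (real (n + 1))^2"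
    using assms by (intro convolution_le) auto
  then have S: "\<bar>\<Sum>k=2..n-1. y k * y (n + 1 - k)\<bar> \<le> 8 * \<epsilon>^2 * R^(n - 1) / (real n + 1)^2"
    by (simp add: add.commute)
  have coeff: "\<bar>- \<kappa> * (real n + 1) / 2\<bar> = \<kappa> * (real n + 1) / 2"
    using assms by simp
  have "\<bar>- \<kappa> * (real n + 1) / 2 * (\<Sum>k=2..n-1. y k * y (n + 1 - k))\<bar>
      \<le> \<kappa> * (real n + 1) / 2 * (8 * \<epsilon>^2 * R^(n - 1) / (real n + 1)^2)"
    using S assms unfolding abs_mult coeff by (intro mult_left_mono) auto
  also have "\<dots> = (8 * \<kappa> * \<epsilon>) / 2 * \<epsilon> * R^(n - 1) / (real n + 1)"
  proof -
    have "\<kappa> * x / 2 * (8 * \<epsilon>^2 * Q / x^2) = (8 * \<kappa> * \<epsilon>) / 2 * \<epsilon> * Q / x"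
      if "0 < x" for x Q :: real
      using that by (simp add: field_simps power2_eq_square)
    from this[of "real n + 1" "R^(n - 1)"] show ?thesis by simp
  qed
  also have "\<dots> \<le> a / 2 * \<epsilon> * R^(n - 1) / (real n + 1)"
    using assms by (intro divide_right_mono mult_right_mono) auto
  also have "\<dots> \<le> a / 2 * \<epsilon> * R^(n - 1) / real n"
  proof -
    have "0 < 8 * \<kappa> * \<epsilon>" using assms by simp
    then have "0 < a" using assms by linarith
    then show ?thesis using assms by (intro divide_left_mono) auto
  qed
  finally show ?thesis .
qed

lemma recurrence_convolution_term_le:
  fixes y :: "nat \<Rightarrow> real"
  assumes n: "2 \<le> n" and "0 \<le> R"
    and coeffs: "\<And>k. 1 \<le> k \<Longrightarrow> k < n \<Longrightarrow> \<bar>y k\<bar> \<le> K * R^(k - 1) / (real k)^2"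
  shows "\<bar>(real n / 2 - 2) * (\<Sum>k=1..n-1. y k * y (n - k))\<bar> \<le> 8 * K^2 * R^(n - 2) / real n"
proof -
  have "\<bar>\<Sum>k=1..n-1. y k * y (n - k)\<bar> \<le> 8 * K^2 * R^(n - 2) / (real n)^2"
    using assms by (intro convolution_le) auto
  then have "\<bar>(real n / 2 - 2) * (\<Sum>k=1..n-1. y k * y (n - k))\<bar> \<le> real n * (8 * K^2 * R^(n - 2) / (real n)^2)"
    unfolding abs_mult using n by (intro mult_mono) auto
  then show ?thesis using n by (simp add: power2_eq_square)
qed

lemma recurrence_lower_order_terms_le:
  fixes y :: "nat \<Rightarrow> real"
  assumes n: "2 \<le> n" and "1 \<le> R" and y0: "y 0 = 0"
    and coeffs: "\<And>k. 1 \<le> k \<Longrightarrow> k < n \<Longrightarrow> \<bar>y k\<bar> \<le> K * R^(k - 1) / (real k)^2"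
  shows "\<bar>(real n / 2 - 2) * (\<Sum>k=1..n-1. y k * y (n - k))\<bar>
      + \<bar>(p1 * (real n - 1) - 2 * \<beta>) * y (n - 1)\<bar> + \<bar>(real n - 4) * y (n - 2)\<bar>
    \<le> (8 * K^2 + (4 * (\<bar>p1\<bar> + 2 * \<bar>\<beta>\<bar>) + 9) * K) * R^(n - 2) / real n"
proof -
  have "\<bar>y 1\<bar> \<le> K" using coeffs[of 1] n by simp
  then have K: "0 \<le> K" by linarith
  have "0 \<le> R" using assms(2) by simp
  note t2 = recurrence_convolution_term_le[OF n this coeffs]
  have t3: "\<bar>(p1 * (real n - 1) - 2 * \<beta>) * y (n - 1)\<bar> \<le> 4 * (\<bar>p1\<bar> + 2 * \<bar>\<beta>\<bar>) * K * R^(n - 2) / real n"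
  proof -
    have "\<bar>p1 * (real n - 1)\<bar> \<le> \<bar>p1\<bar> * real n"
      using n by (auto simp: abs_mult intro!: mult_left_mono)
    moreover have "2 * \<bar>\<beta>\<bar> * 1 \<le> 2 * \<bar>\<beta>\<bar> * real n"
      using n by (intro mult_left_mono) auto
    ultimately have c: "\<bar>p1 * (real n - 1) - 2 * \<beta>\<bar> \<le> (\<bar>p1\<bar> + 2 * \<bar>\<beta>\<bar>) * real n"
      by (simp add: algebra_simps)
    have y: "\<bar>y (n - 1)\<bar> \<le> K * R^(n - 1 - 1) / (real (n - 1))^2"
      using coeffs[of "n - 1"] n by simp
    have "\<bar>(p1 * (real n - 1) - 2 * \<beta>) * y (n - 1)\<bar>
        \<le> (real 1 + 1)^2 * (\<bar>p1\<bar> + 2 * \<bar>\<beta>\<bar>) * K * R^(n - 2) / real n"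
      by (rule shifted_term_le[OF _ _ _ K c y]) (use assms in auto)
    then show ?thesis by simp
  qed
  have t4: "\<bar>(real n - 4) * y (n - 2)\<bar> \<le> 9 * K * R^(n - 2) / real n"
  proof (cases "n = 2")
    case False
    have y: "\<bar>y (n - 2)\<bar> \<le> K * R^(n - 2 - 1) / (real (n - 2))^2"
      using coeffs[of "n - 2"] n False by simp
    have c: "\<bar>real n - 4\<bar> \<le> 1 * real n" using n by simp
    have "\<bar>(real n - 4) * y (n - 2)\<bar> \<le> (real 2 + 1)^2 * 1 * K * R^(n - 2) / real n"
      by (rule shifted_term_le[OF _ _ _ K c y]) (use False assms in auto)
    then show ?thesis by simp
  qed (use y0 K assms in simp)
  have "\<bar>(real n / 2 - 2) * (\<Sum>k=1..n-1. y k * y (n - k))\<bar>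
      + \<bar>(p1 * (real n - 1) - 2 * \<beta>) * y (n - 1)\<bar> + \<bar>(real n - 4) * y (n - 2)\<bar>
    \<le> 8 * K^2 * R^(n - 2) / real n + 4 * (\<bar>p1\<bar> + 2 * \<bar>\<beta>\<bar>) * K * R^(n - 2) / real n
      + 9 * K * R^(n - 2) / real n"
    by (intro add_mono t2 t3 t4)
  also have "\<dots> = (8 * K^2 + (4 * (\<bar>p1\<bar> + 2 * \<bar>\<beta>\<bar>) + 9) * K) * R^(n - 2) / real n"
    by (simp add: add_divide_distrib algebra_simps)
  finally show ?thesis .
qed

text \<open>The quadratic term grows like the bound being propagated, so it is controlled by the
  smallness of \<open>\<epsilon>\<close>; the other terms carry one factor of \<open>R\<close> less and are absorbed by a large \<open>R\<close>.\<close>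

lemma recurrence_rhs_le:
  fixes y :: "nat \<Rightarrow> real"
  assumes n: "2 \<le> n" and "0 < \<kappa>" "0 < \<epsilon>" "1 \<le> R"
    and small: "8 * \<kappa> * \<epsilon> \<le> a"
    and large: "2 * (8 * K^2 + (4 * (\<bar>p1\<bar> + 2 * \<bar>\<beta>\<bar>) + 9) * K) \<le> a * \<epsilon> * R"
    and y0: "y 0 = 0"
    and small_coeffs: "\<And>k. 2 \<le> k \<Longrightarrow> k < n \<Longrightarrow> \<bar>y k\<bar> \<le> \<epsilon> * R^(k - 1) / (real k)^2"
    and coeffs: "\<And>k. 1 \<le> k \<Longrightarrow> k < n \<Longrightarrow> \<bar>y k\<bar> \<le> K * R^(k - 1) / (real k)^2"
  shows "\<bar>recurrence_rhs \<kappa> p1 \<beta> y n\<bar> \<le> a * \<epsilon> * R^(n - 1) / real n"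
proof -
  have "n - 1 = Suc (n - 2)" using n by simp
  then have R: "R^(n - 1) = R * R^(n - 2)" by simp
  have "(8 * K^2 + (4 * (\<bar>p1\<bar> + 2 * \<bar>\<beta>\<bar>) + 9) * K) * R^(n - 2)
      \<le> (a * \<epsilon> * R / 2) * R^(n - 2)"
    using large assms by (intro mult_right_mono) auto
  then have lower: "(8 * K^2 + (4 * (\<bar>p1\<bar> + 2 * \<bar>\<beta>\<bar>) + 9) * K) * R^(n - 2) / real n
      \<le> a / 2 * \<epsilon> * R^(n - 1) / real n"
    unfolding R by (intro divide_right_mono) auto
  have tri: "\<bar>A - B + C + D\<bar> \<le> \<bar>A\<bar> + (\<bar>B\<bar> + \<bar>C\<bar> + \<bar>D\<bar>)" for A B C D :: real
    by linarith
  have "\<bar>recurrence_rhs \<kappa> p1 \<beta> y n\<bar>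
      \<le> \<bar>- \<kappa> * (real n + 1) / 2 * (\<Sum>k=2..n-1. y k * y (n + 1 - k))\<bar>
        + (\<bar>(real n / 2 - 2) * (\<Sum>k=1..n-1. y k * y (n - k))\<bar>
          + \<bar>(p1 * (real n - 1) - 2 * \<beta>) * y (n - 1)\<bar> + \<bar>(real n - 4) * y (n - 2)\<bar>)"
    unfolding recurrence_rhs_def by (rule tri)
  also have "\<dots> \<le> a / 2 * \<epsilon> * R^(n - 1) / real n + a / 2 * \<epsilon> * R^(n - 1) / real n"
    by (rule add_mono[OF recurrence_quadratic_term_le[OF n assms(2-4) small small_coeffs]
          order_trans[OF recurrence_lower_order_terms_le[OF n assms(4) y0 coeffs] lower]])
  finally show ?thesis by (simp add: mult.commute mult.left_commute)
qed

section \<open>Power series\<close>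

lemma fps_conv_radius_ge_if_geometric_bound:
  fixes f :: "'a :: {banach, real_normed_div_algebra} fps"
  assumes bound: "\<And>n. norm (fps_nth f n) \<le> K * R^n" and "0 < R"
  shows "ereal (1 / R) \<le> fps_conv_radius f"
  unfolding fps_conv_radius_def
proof (rule conv_radius_geI_ex')
  fix r :: real assume r: "0 < r" "ereal r < ereal (1 / R)"
  then have Rr: "R * r < 1" using assms by (simp add: field_simps)
  show "summable (\<lambda>n. fps_nth f n * of_real r ^ n)"
  proof (rule summable_comparison_test')
    show "summable (\<lambda>n. K * (R * r)^n)"
      using Rr r assms by (intro summable_mult summable_geometric) auto
    fix n
    have "norm (fps_nth f n * of_real r ^ n) = norm (fps_nth f n) * r^n"
      using r by (simp add: norm_mult norm_power)
    also have "\<dots> \<le> K * R^n * r^n"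
      using r by (intro mult_right_mono bound) auto
    finally show "norm (fps_nth f n * of_real r ^ n) \<le> K * (R * r)^n"
      by (simp add: power_mult_distrib mult.assoc)
  qed
qed

lemma fps_nth_mult_deriv_self:
  fixes f :: "'a :: comm_ring_1 fps"
  shows "2 * fps_nth (f * fps_deriv f) n = of_nat (Suc n) * fps_nth (f * f) (Suc n)"
proof -
  have "fps_deriv (f * f) = f * fps_deriv f + f * fps_deriv f"
    by (simp only: fps_deriv_mult mult.commute[of "fps_deriv f" f])
  then have "of_nat (n + 1) * fps_nth (f * f) (n + 1) = fps_nth (f * fps_deriv f) n + fps_nth (f * fps_deriv f) n"
    by (metis fps_add_nth fps_deriv_nth)
  then show ?thesis
    by (metis mult_2 Suc_eq_plus1)
qed

lemma fps_mult_nth_if_nth_0_eq_0: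
  fixes f g :: "'a :: comm_semiring_1 fps"
  assumes "fps_nth f 0 = 0" "fps_nth g 0 = 0"
  shows "fps_nth (f * g) n = (\<Sum>k=1..n-1. fps_nth f k * fps_nth g (n - k))"
  unfolding fps_mult_nth using assms by (intro sum.mono_neutral_right) (auto simp: Suc_le_eq)

lemma fps_conv_radius_funpow_deriv:
  fixes H :: "real fps"
  shows "fps_conv_radius H \<le> fps_conv_radius ((fps_deriv ^^ n) H)"
  by (induction n) (auto intro: order_trans fps_conv_radius_deriv)

lemma has_real_derivative_eval_fps_shift:
  fixes H :: "real fps"
  assumes "x \<in> eball c (fps_conv_radius H)"
  shows "((\<lambda>x. eval_fps H (x - c)) has_real_derivative eval_fps (fps_deriv H) (x - c)) (at x)"
proof -
  have "(eval_fps H has_real_derivative eval_fps (fps_deriv H) (x - c)) (at (x - c))"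
    using assms by (intro has_field_derivative_eval_fps) (simp add: dist_real_def abs_minus_commute)
  then show ?thesis
    using DERIV_shift[of "eval_fps H" _ x "- c"] by simp
qed

lemma higher_deriv_eval_fps_shift:
  fixes H :: "real fps"
  assumes "x \<in> eball c (fps_conv_radius H)"
  shows "(deriv ^^ n) (\<lambda>x. eval_fps H (x - c)) x = eval_fps ((fps_deriv ^^ n) H) (x - c)"
  using assms
proof (induction n arbitrary: x)
  case (Suc n)
  have "\<forall>\<^sub>F y in nhds x. (deriv ^^ n) (\<lambda>x. eval_fps H (x - c)) y = eval_fps ((fps_deriv ^^ n) H) (y - c)"
    using eventually_nhds_in_open[OF open_eball Suc.prems] by eventually_elim (rule Suc.IH)
  then have "(deriv ^^ Suc n) (\<lambda>x. eval_fps H (x - c)) x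
      = deriv (\<lambda>y. eval_fps ((fps_deriv ^^ n) H) (y - c)) x"
    by (simp add: deriv_cong_ev)
  also have "\<dots> = eval_fps (fps_deriv ((fps_deriv ^^ n) H)) (x - c)"
    using Suc.prems fps_conv_radius_funpow_deriv[of H n]
    by (intro DERIV_imp_deriv has_real_derivative_eval_fps_shift) (auto intro: less_le_trans)
  finally show ?case by simp
qed simp

lemma smooth_on_real_eval_fps_shift:
  fixes H :: "real fps"
  assumes "S \<subseteq> eball c (fps_conv_radius H)"
  shows "smooth_on_real S (\<lambda>x. eval_fps H (x - c))"
  unfolding smooth_on_real_def
proof (intro allI ballI)
  fix n x assume "x \<in> S"
  then have x: "x \<in> eball c (fps_conv_radius H)" using assms by auto
  have ev: "\<forall>\<^sub>F y in nhds x. eval_fps ((fps_deriv ^^ n) H) (y - c) = (deriv ^^ n) (\<lambda>x. eval_fps H (x - c)) y"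
    using eventually_nhds_in_open[OF open_eball x]
    by eventually_elim (rule higher_deriv_eval_fps_shift[symmetric])
  have "((\<lambda>y. eval_fps ((fps_deriv ^^ n) H) (y - c)) has_real_derivative
      eval_fps (fps_deriv ((fps_deriv ^^ n) H)) (x - c)) (at x)"
    by (rule has_real_derivative_eval_fps_shift)
      (use x fps_conv_radius_funpow_deriv[of H n] in \<open>auto intro: less_le_trans\<close>)
  then have "((deriv ^^ n) (\<lambda>x. eval_fps H (x - c)) has_real_derivative
      eval_fps (fps_deriv ((fps_deriv ^^ n) H)) (x - c)) (at x)"
    by (rule DERIV_cong_ev[OF refl ev refl, THEN iffD1])
  then show "(deriv ^^ n) (\<lambda>x. eval_fps H (x - c)) differentiable at x"
    by (auto simp: real_differentiable_def)
qed

section \<open>The power-series solution of the singular equation\<close>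

text \<open>This congruence rule lets the function package see that \<open>solution_coeff (n + 2)\<close> only
  calls \<open>solution_coeff\<close> at smaller indices.\<close>

lemma recurrence_rhs_cong [fundef_cong]:
  "n = m \<Longrightarrow> (\<And>k. k < Suc (Suc m) \<Longrightarrow> y k = z k) \<Longrightarrow>
    recurrence_rhs \<kappa> p1 \<beta> y (Suc (Suc n)) = recurrence_rhs \<kappa> p1 \<beta> z (Suc (Suc m))"
  unfolding recurrence_rhs_def by (intro arg_cong2[where f="(+)"] arg_cong2[where f="(-)"]
    arg_cong2[where f="(*)"] sum.cong) auto

text \<open>The equation \<open>(\<kappa> + u) y y' - u (p0 + p1 u + u\<^sup>2) y' = y (a + 2 y - 2 \<beta> u - 2 u\<^sup>2)\<close>.
  By \<open>F_at_1_plus\<close> and \<open>G_at_1_plus\<close> it is \<open>G(H,U) H' = F(H,U)\<close> in the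
  variable \<open>u = U - 1\<close>, for the parameters used in \<open>B_series\<close>.\<close>

locale singular_ode =
  fixes \<kappa> a p0 p1 \<beta> :: real
  assumes \<kappa>_pos: "0 < \<kappa>" and a_pos: "0 < a" and p0_nonneg: "0 \<le> p0"
begin

fun solution_coeff :: "nat \<Rightarrow> real" where
  "solution_coeff 0 = 0"
| "solution_coeff (Suc 0) = (a + p0) / \<kappa>"
| "solution_coeff (Suc (Suc n)) =
     recurrence_rhs \<kappa> p1 \<beta> solution_coeff (Suc (Suc n)) / (real (Suc (Suc n)) * a + p0)"

lemma solution_coeff_eq:
  "2 \<le> n \<Longrightarrow> solution_coeff n = recurrence_rhs \<kappa> p1 \<beta> solution_coeff n / (real n * a + p0)"
  by (cases n rule: solution_coeff.cases) auto

lemma solution_coeff_le: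
  assumes "0 < \<epsilon>" "8 * \<kappa> * \<epsilon> \<le> a" "1 \<le> R" "\<bar>solution_coeff 1\<bar> \<le> K" "\<epsilon> \<le> K"
    and "2 * (8 * K^2 + (4 * (\<bar>p1\<bar> + 2 * \<bar>\<beta>\<bar>) + 9) * K) \<le> a * \<epsilon> * R"
  shows "2 \<le> n \<Longrightarrow> \<bar>solution_coeff n\<bar> \<le> \<epsilon> * R^(n - 1) / (real n)^2"
proof (induction n rule: less_induct)
  case (less n)
  have coeffs: "\<bar>solution_coeff k\<bar> \<le> K * R^(k - 1) / (real k)^2" if "1 \<le> k" "k < n" for k
  proof (cases "k = 1")
    case False
    then have "\<bar>solution_coeff k\<bar> \<le> \<epsilon> * R^(k - 1) / (real k)^2"
      using less.IH that by simp
    also have "\<dots> \<le> K * R^(k - 1) / (real k)^2"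
      using assms by (intro divide_right_mono mult_right_mono) auto
    finally show ?thesis .
  next
    case True
    then show ?thesis using assms by simp
  qed
  have rhs: "\<bar>recurrence_rhs \<kappa> p1 \<beta> solution_coeff n\<bar> \<le> a * \<epsilon> * R^(n - 1) / real n"
    by (rule recurrence_rhs_le) (use less.prems less.IH assms \<kappa>_pos coeffs in auto)
  have pos: "0 < real n * a" using less.prems a_pos by simp
  have "\<bar>solution_coeff n\<bar> = \<bar>recurrence_rhs \<kappa> p1 \<beta> solution_coeff n\<bar> / (real n * a + p0)"
    using solution_coeff_eq[OF less.prems] pos p0_nonneg by simp
  also have "\<dots> \<le> \<bar>recurrence_rhs \<kappa> p1 \<beta> solution_coeff n\<bar> / (real n * a)"
    using pos p0_nonneg by (intro divide_left_mono) auto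
  also have "\<dots> \<le> (a * \<epsilon> * R^(n - 1) / real n) / (real n * a)"
    using rhs pos by (intro divide_right_mono) auto
  also have "\<dots> = \<epsilon> * R^(n - 1) / (real n)^2"
    using a_pos less.prems by (simp add: field_simps power2_eq_square)
  finally show ?case .
qed

lemma solution_coeff_geometric_bound: "\<exists>K R. 0 < R \<and> (\<forall>n. \<bar>solution_coeff n\<bar> \<le> K * R^n)"
proof -
  define \<epsilon> where "\<epsilon> = a / (8 * \<kappa>)"
  define K where "K = \<bar>solution_coeff 1\<bar> + \<epsilon>"
  define L where "L = 8 * K^2 + (4 * (\<bar>p1\<bar> + 2 * \<bar>\<beta>\<bar>) + 9) * K"
  define R where "R = max 1 (2 * L / (a * \<epsilon>))"
  have \<epsilon>: "0 < \<epsilon>" "8 * \<kappa> * \<epsilon> \<le> a" using a_pos \<kappa>_pos by (auto simp: \<epsilon>_def)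
  have R: "1 \<le> R" "2 * L \<le> a * \<epsilon> * R"
  proof -
    show "1 \<le> R" by (simp add: R_def)
    have "2 * L / (a * \<epsilon>) \<le> R" by (simp add: R_def)
    then show "2 * L \<le> a * \<epsilon> * R"
      using \<epsilon> a_pos by (simp add: pos_divide_le_eq mult.commute)
  qed
  have K: "\<bar>solution_coeff 1\<bar> \<le> K" "\<epsilon> \<le> K" "0 \<le> K" using \<epsilon> by (auto simp: K_def)
  have "\<bar>solution_coeff n\<bar> \<le> K * R^n" for n
  proof (cases "2 \<le> n")
    case True
    have "\<bar>solution_coeff n\<bar> \<le> \<epsilon> * R^(n - 1) / (real n)^2"
      using solution_coeff_le[OF \<epsilon> R(1) K(1,2)] R(2) True by (simp add: L_def)
    also have "\<dots> \<le> \<epsilon> * R^(n - 1) / 1"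
    proof (rule divide_left_mono)
      have "1 \<le> real n" using True by simp
      then show "1 \<le> (real n)^2" by (rule one_le_power)
    qed (use True \<epsilon> R in auto)
    also have "\<dots> \<le> K * R^n"
      using K R by (simp only: div_by_1, intro mult_mono power_increasing) auto
    finally show ?thesis .
  next
    case False
    then consider "n = 0" | "n = 1" by linarith
    then show ?thesis
    proof cases
      case 2
      then show ?thesis using K R mult_left_mono[of 1 R K] by simp
    qed (use K in simp)
  qed
  then show ?thesis using R by (meson less_le_trans zero_less_one)
qed

definition solution_series :: "real fps" where
  "solution_series = Abs_fps solution_coeff"

lemma solution_series_conv_radius_pos: "0 < fps_conv_radius solution_series"
proof -
  obtain K R where R: "0 < R" "\<And>n. \<bar>solution_coeff n\<bar> \<le> K * R^n"
    using solution_coeff_geometric_bound by blast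
  then have "ereal (1 / R) \<le> fps_conv_radius solution_series"
    by (intro fps_conv_radius_ge_if_geometric_bound) (auto simp: solution_series_def)
  moreover have "0 < ereal (1 / R)" using R by simp
  ultimately show ?thesis by (rule less_le_trans[rotated])
qed

lemma fps_nth_solution_series [simp]: "fps_nth solution_series k = solution_coeff k"
  by (simp add: solution_series_def)

lemma solution_series_square_nth:
  "fps_nth (solution_series * solution_series) n = (\<Sum>k=1..n-1. solution_coeff k * solution_coeff (n - k))"
  by (simp add: fps_mult_nth_if_nth_0_eq_0)

lemma solution_series_square_Suc_nth:
  assumes "2 \<le> n"
  shows "fps_nth (solution_series * solution_series) (Suc n)
    = 2 * solution_coeff 1 * solution_coeff n + (\<Sum>k=2..n-1. solution_coeff k * solution_coeff (n + 1 - k))"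
proof -
  obtain m where m: "n = Suc m" "1 \<le> m" using assms by (cases n) auto
  have "fps_nth (solution_series * solution_series) (Suc n)
      = (\<Sum>k=1..Suc m. solution_coeff k * solution_coeff (Suc n - k))"
    by (simp add: solution_series_square_nth m)
  also have "\<dots> = solution_coeff 1 * solution_coeff n
      + (\<Sum>k=2..m. solution_coeff k * solution_coeff (Suc n - k)) + solution_coeff n * solution_coeff 1"
    using m by (simp add: sum.atLeast_Suc_atMost sum.cl_ivl_Suc numeral_2_eq_2)
  finally show ?thesis using m by simp
qed

lemma solution_series_ode_lhs_nth:
  fixes n :: nat
  defines "Y \<equiv> solution_series" and "y \<equiv> solution_coeff"
  shows "fps_nth ((fps_const \<kappa> + fps_X) * (Y * fps_deriv Y)
      - fps_X * (fps_const p0 + fps_const p1 * fps_X + fps_X^2) * fps_deriv Y) n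
    = \<kappa> * ((real n + 1) / 2 * fps_nth (Y * Y) (Suc n)) + real n / 2 * fps_nth (Y * Y) n
      - p0 * (real n * y n) - p1 * ((real n - 1) * y (n - 1)) - (real n - 2) * y (n - 2)"
proof -
  have YD: "fps_nth (Y * fps_deriv Y) k = (real k + 1) / 2 * fps_nth (Y * Y) (Suc k)" for k
    using fps_nth_mult_deriv_self[of Y k] by (simp add: add.commute mult.commute)
  have XYD: "fps_nth (fps_X * (Y * fps_deriv Y)) k = real k / 2 * fps_nth (Y * Y) k" for k
    by (cases k) (simp_all add: YD)
  have XD: "fps_nth (fps_X * fps_deriv Y) k = real k * y k" for k
    by (cases k) (simp_all add: Y_def y_def add.commute)
  have XXD: "fps_nth (fps_X * (fps_X * fps_deriv Y)) k = (real k - 1) * y (k - 1)" for k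
    by (cases k) (simp_all add: XD Y_def y_def)
  have XXXD: "fps_nth (fps_X * (fps_X * (fps_X * fps_deriv Y))) k = (real k - 2) * y (k - 2)" for k
    by (cases k) (simp_all add: XXD Y_def y_def Suc_diff_Suc algebra_simps)
  have "(fps_const \<kappa> + fps_X) * (Y * fps_deriv Y) - fps_X * (fps_const p0 + fps_const p1 * fps_X + fps_X^2) * fps_deriv Y
    = fps_const \<kappa> * (Y * fps_deriv Y) + fps_X * (Y * fps_deriv Y) - fps_const p0 * (fps_X * fps_deriv Y)
      - fps_const p1 * (fps_X * (fps_X * fps_deriv Y)) - fps_X * (fps_X * (fps_X * fps_deriv Y))"
    by (simp add: algebra_simps power2_eq_square)
  then show ?thesis
    by (simp only: fps_sub_nth fps_add_nth fps_mult_left_const_nth YD XYD XD XXD XXXD)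
qed

lemma solution_series_ode_rhs_nth:
  fixes n :: nat
  defines "Y \<equiv> solution_series" and "y \<equiv> solution_coeff"
  shows "fps_nth (Y * (fps_const a + 2 * Y - fps_const (2 * \<beta>) * fps_X - 2 * fps_X^2)) n
    = a * y n + 2 * fps_nth (Y * Y) n - 2 * \<beta> * y (n - 1) - 2 * y (n - 2)"
proof -
  have XY: "fps_nth (fps_X * Y) k = y (k - 1)" for k
    by (cases k) (simp_all add: Y_def y_def)
  have XXY: "fps_nth (fps_X * (fps_X * Y)) k = y (k - 2)" for k
    by (cases k) (simp_all add: XY Y_def y_def)
  have "Y * (fps_const a + 2 * Y - fps_const (2 * \<beta>) * fps_X - 2 * fps_X^2)
    = fps_const a * Y + fps_const 2 * (Y * Y) - fps_const (2 * \<beta>) * (fps_X * Y)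
      - fps_const 2 * (fps_X * (fps_X * Y))"
    by (simp add: algebra_simps power2_eq_square numeral_fps_const)
  then show ?thesis
    by (simp only: fps_sub_nth fps_add_nth fps_mult_left_const_nth XY XXY) (simp add: Y_def y_def)
qed

lemma solution_series_ode:
  "(fps_const \<kappa> + fps_X) * (solution_series * fps_deriv solution_series)
     - fps_X * (fps_const p0 + fps_const p1 * fps_X + fps_X^2) * fps_deriv solution_series
   = solution_series * (fps_const a + 2 * solution_series - fps_const (2 * \<beta>) * fps_X - 2 * fps_X^2)"
proof (rule fps_ext)
  fix n :: nat
  define y where "y = solution_coeff"
  define c where "c = (a + p0) / \<kappa>"
  have y01: "y 0 = 0" "y 1 = c" by (simp_all add: y_def c_def)
  have "\<kappa> * c - a - p0 = 0" using \<kappa>_pos by (simp add: c_def)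
  note nth = solution_series_ode_lhs_nth solution_series_ode_rhs_nth
  consider "n = 0" | "n = 1" | "2 \<le> n" by linarith
  then show "fps_nth ((fps_const \<kappa> + fps_X) * (solution_series * fps_deriv solution_series)
     - fps_X * (fps_const p0 + fps_const p1 * fps_X + fps_X^2) * fps_deriv solution_series) n
   = fps_nth (solution_series * (fps_const a + 2 * solution_series - fps_const (2 * \<beta>) * fps_X - 2 * fps_X^2)) n"
  proof cases
    case 1
    then show ?thesis unfolding nth by (simp add: solution_series_square_nth)
  next
    case 2
    have "fps_nth (solution_series * solution_series) 2 = c * c"
      using y01 by (simp add: solution_series_square_nth numeral_2_eq_2 y_def)
    moreover have "\<kappa> * (c * c) = a * c + c * p0"
      using \<kappa>_pos by (simp add: c_def field_simps power2_eq_square)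
    ultimately show ?thesis unfolding nth y_def[symmetric] using 2 y01
      by (simp add: solution_series_square_nth y_def algebra_simps)
  next
    case 3
    have "0 < real n * a + p0" using 3 a_pos p0_nonneg by (simp add: add_pos_nonneg)
    then have rec: "y n * (real n * a + p0) = recurrence_rhs \<kappa> p1 \<beta> y n"
      using solution_coeff_eq[of n] 3 by (simp add: y_def)
    have "\<kappa> * ((real n + 1) / 2 * (2 * c * y n + (\<Sum>k=2..n-1. y k * y (n + 1 - k))))
        + real n / 2 * (\<Sum>k=1..n-1. y k * y (n - k)) - p0 * (real n * y n)
        - p1 * ((real n - 1) * y (n - 1)) - (real n - 2) * y (n - 2)
      - (a * y n + 2 * (\<Sum>k=1..n-1. y k * y (n - k)) - 2 * \<beta> * y (n - 1) - 2 * y (n - 2))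
      = (real n + 1) * y n * (\<kappa> * c - a - p0) + (y n * (real n * a + p0) - recurrence_rhs \<kappa> p1 \<beta> y n)"
      unfolding recurrence_rhs_def by (simp add: field_simps)
    also have "\<dots> = 0" using rec \<open>\<kappa> * c - a - p0 = 0\<close> by simp
    finally show ?thesis
      unfolding nth solution_series_square_Suc_nth[OF 3]
      unfolding solution_series_square_nth y_def[symmetric]
      using y01 by simp
  qed
qed

lemma solution_ode_eventually:
  "\<forall>\<^sub>F u in nhds 0.
     (\<kappa> + u) * (eval_fps solution_series u * eval_fps (fps_deriv solution_series) u)
       - u * (p0 + p1 * u + u^2) * eval_fps (fps_deriv solution_series) u
     = eval_fps solution_series u * (a + 2 * eval_fps solution_series u - 2 * \<beta> * u - 2 * u^2)"
proof -
  let ?Y = solution_series and ?y = "eval_fps solution_series"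
    and ?y' = "eval_fps (fps_deriv solution_series)"
  have "?y has_fps_expansion ?Y"
    using solution_series_conv_radius_pos by (rule eval_fps_has_fps_expansion)
  moreover have "?y' has_fps_expansion fps_deriv ?Y"
    using solution_series_conv_radius_pos fps_conv_radius_deriv[of ?Y]
    by (intro eval_fps_has_fps_expansion) (rule less_le_trans)
  ultimately have "(\<lambda>u. ((\<kappa> + u) * (?y u * ?y' u) - u * (p0 + p1 * u + u^2) * ?y' u)
      - ?y u * (a + 2 * ?y u - 2 * \<beta> * u - 2 * u^2)) has_fps_expansion
    ((fps_const \<kappa> + fps_X) * (?Y * fps_deriv ?Y) - fps_X * (fps_const p0 + fps_const p1 * fps_X + fps_X^2) * fps_deriv ?Y
      - ?Y * (fps_const a + 2 * ?Y - fps_const (2 * \<beta>) * fps_X - 2 * fps_X^2))"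
    by (intro fps_expansion_intros)
  then have "\<forall>\<^sub>F u in nhds 0. eval_fps 0 u = ((\<kappa> + u) * (?y u * ?y' u) - u * (p0 + p1 * u + u^2) * ?y' u)
      - ?y u * (a + 2 * ?y u - 2 * \<beta> * u - 2 * u^2)"
    unfolding solution_series_ode by (simp add: has_fps_expansion_def)
  then show ?thesis by eventually_elim simp
qed

end

section \<open>The vector field near B\<close>

lemma F_at_1_plus:
  "F \<gamma> \<mu> h (1 + u) = h * ((\<gamma> - 1) * (1 - \<mu>) + 2 * h - 2 * (2 - k1 \<gamma> \<mu>) * u - 2 * u^2)"
  by (simp add: F_def k1_def field_simps power2_eq_square)

lemma G_at_1_plus:
  "G \<gamma> \<mu> h (1 + u) = h * (1 + k2 \<gamma> \<mu> + u) - u * ((1 - \<mu>) + (2 - \<mu>) * u + u^2)"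
  by (simp add: G_def algebra_simps power2_eq_square)

lemma F_div_G_diff:
  assumes "G \<gamma> \<mu> f U \<noteq> 0" "G \<gamma> \<mu> h U \<noteq> 0"
  shows "F \<gamma> \<mu> f U / G \<gamma> \<mu> f U - F \<gamma> \<mu> h U / G \<gamma> \<mu> h U
    = (f - h) * (2 * f * h * (U + k2 \<gamma> \<mu>)
        - U * (U - 1) * (U - \<mu>) * (2 * (f + h) - 2 * (U^2 - k1 \<gamma> \<mu> * U + \<mu>)))
      / (G \<gamma> \<mu> f U * G \<gamma> \<mu> h U)"
proof -
  have "F \<gamma> \<mu> f U * G \<gamma> \<mu> h U - F \<gamma> \<mu> h U * G \<gamma> \<mu> f U
    = (f - h) * (2 * f * h * (U + k2 \<gamma> \<mu>)
        - U * (U - 1) * (U - \<mu>) * (2 * (f + h) - 2 * (U^2 - k1 \<gamma> \<mu> * U + \<mu>)))"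
    by (simp add: F_def G_def algebra_simps power2_eq_square)
  with assms show ?thesis by (simp add: diff_frac_eq)
qed

lemma G_div_tendsto:
  assumes "(h has_real_derivative s) (at 1)" "h 1 = 0"
  shows "((\<lambda>U. G \<gamma> \<mu> (h U) U / (U - 1)) \<longlongrightarrow> s * (1 + k2 \<gamma> \<mu>) - (1 - \<mu>)) (at 1)"
proof -
  have "((\<lambda>U. (h U - h 1) / (U - 1)) \<longlongrightarrow> s) (at 1)"
    using assms(1) by (simp add: has_field_derivative_iff)
  then have "((\<lambda>U. (h U - h 1) / (U - 1) * (U + k2 \<gamma> \<mu>) - U * (U - \<mu>))
      \<longlongrightarrow> s * (1 + k2 \<gamma> \<mu>) - 1 * (1 - \<mu>)) (at 1)"
    by (intro tendsto_intros)
  moreover have "\<forall>\<^sub>F U in at 1. (h U - h 1) / (U - 1) * (U + k2 \<gamma> \<mu>) - U * (U - \<mu>)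
      = G \<gamma> \<mu> (h U) U / (U - 1)"
    by (auto simp: eventually_at_filter G_def assms(2) field_simps)
  ultimately show ?thesis by (simp add: tendsto_cong)
qed

lemma cross_term_tendsto:
  assumes "(f has_real_derivative s) (at 1)" "f 1 = 0" "(h has_real_derivative t) (at 1)" "h 1 = 0"
  shows "((\<lambda>U. (2 * f U * h U * (U + k2 \<gamma> \<mu>)
      - U * (U - 1) * (U - \<mu>) * (2 * (f U + h U) - 2 * (U^2 - k1 \<gamma> \<mu> * U + \<mu>))) / (U - 1))
    \<longlongrightarrow> - (\<gamma> - 1) * (1 - \<mu>)^2) (at 1)"
proof -
  have f': "((\<lambda>U. (f U - f 1) / (U - 1)) \<longlongrightarrow> s) (at 1)"
    using assms(1) by (simp add: has_field_derivative_iff)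
  have "(f \<longlongrightarrow> 0) (at 1)" "(h \<longlongrightarrow> 0) (at 1)"
    using assms by (metis DERIV_isCont isCont_def)+
  then have "((\<lambda>U. 2 * ((f U - f 1) / (U - 1)) * h U * (U + k2 \<gamma> \<mu>)
      - U * (U - \<mu>) * (2 * (f U + h U) - 2 * (U^2 - k1 \<gamma> \<mu> * U + \<mu>)))
    \<longlongrightarrow> 2 * s * 0 * (1 + k2 \<gamma> \<mu>) - 1 * (1 - \<mu>) * (2 * (0 + 0) - 2 * (1^2 - k1 \<gamma> \<mu> * 1 + \<mu>))) (at 1)"
    by (intro tendsto_intros f')
  moreover have "2 * s * 0 * (1 + k2 \<gamma> \<mu>) - 1 * (1 - \<mu>) * (2 * (0 + 0) - 2 * (1^2 - k1 \<gamma> \<mu> * 1 + \<mu>))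
      = - (\<gamma> - 1) * (1 - \<mu>)^2"
    by (simp add: k1_def field_simps power2_eq_square)
  moreover have "\<forall>\<^sub>F U in at 1. 2 * ((f U - f 1) / (U - 1)) * h U * (U + k2 \<gamma> \<mu>)
      - U * (U - \<mu>) * (2 * (f U + h U) - 2 * (U^2 - k1 \<gamma> \<mu> * U + \<mu>))
    = (2 * f U * h U * (U + k2 \<gamma> \<mu>)
      - U * (U - 1) * (U - \<mu>) * (2 * (f U + h U) - 2 * (U^2 - k1 \<gamma> \<mu> * U + \<mu>))) / (U - 1)"
    by (auto simp: eventually_at_filter assms(2) field_simps)
  ultimately show ?thesis by (simp add: tendsto_cong)
qed

lemma integral_curve_B_eventually:
  assumes "integral_curve_B \<gamma> \<mu> h a b"
  shows "\<forall>\<^sub>F U in at 1. G \<gamma> \<mu> (h U) U \<noteq> 0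
    \<and> (h has_real_derivative F \<gamma> \<mu> (h U) U / G \<gamma> \<mu> (h U) U) (at U)"
proof -
  have "\<forall>\<^sub>F U in nhds 1. U \<in> {a<..<b}"
    using assms by (intro eventually_nhds_in_open) (auto simp: integral_curve_B_def)
  then show ?thesis
    using assms unfolding eventually_at_filter integral_curve_B_def
    by (elim eventually_mono) auto
qed

lemma integral_curve_B_if_eventually:
  assumes "h 1 = 0" "0 < r"
    and "\<forall>\<^sub>F U in at 1. G \<gamma> \<mu> (h U) U \<noteq> 0
      \<and> (h has_real_derivative F \<gamma> \<mu> (h U) U / G \<gamma> \<mu> (h U) U) (at U)"
  shows "\<exists>d. 0 < d \<and> d \<le> r \<and> integral_curve_B \<gamma> \<mu> h (1 - d) (1 + d)"
proof -
  obtain d where d: "0 < d" and near: "\<And>U. U \<noteq> 1 \<Longrightarrow> dist U 1 < d \<Longrightarrow> G \<gamma> \<mu> (h U) U \<noteq> 0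
      \<and> (h has_real_derivative F \<gamma> \<mu> (h U) U / G \<gamma> \<mu> (h U) U) (at U)"
    using assms(3) unfolding eventually_at by blast
  have "integral_curve_B \<gamma> \<mu> h (1 - min d r) (1 + min d r)"
    unfolding integral_curve_B_def
  proof (intro conjI ballI)
    fix U assume "U \<in> {1 - min d r<..<1 + min d r} - {1}"
    then have "U \<noteq> 1" "dist U 1 < d" by (auto simp: dist_real_def abs_less_iff)
    from near[OF this] show "G \<gamma> \<mu> (h U) U \<noteq> 0"
      and "(h has_real_derivative F \<gamma> \<mu> (h U) U / G \<gamma> \<mu> (h U) U) (at U)" by auto
  qed (use assms d in auto)
  then show ?thesis using d assms(2) by (intro exI[of _ "min d r"]) auto
qed

section \<open>Uniqueness\<close>

lemma nonpos_if_decreasing_away_from: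
  fixes \<phi> \<phi>' :: "real \<Rightarrow> real"
  assumes "\<phi> c = 0" "isCont \<phi> c" "\<bar>x - c\<bar> < \<epsilon>"
    and deriv: "\<And>y. y \<noteq> c \<Longrightarrow> \<bar>y - c\<bar> < \<epsilon> \<Longrightarrow>
      (\<phi> has_real_derivative \<phi>' y) (at y) \<and> \<phi>' y * (y - c) \<le> 0"
  shows "\<phi> x \<le> 0"
proof -
  have cont: "continuous_on {min c x..max c x} \<phi>"
  proof (intro continuous_at_imp_continuous_on ballI)
    fix y assume "y \<in> {min c x..max c x}"
    then have "\<bar>y - c\<bar> < \<epsilon>" using assms(3) by auto
    then show "isCont \<phi> y"
      using assms(2) deriv DERIV_isCont by (cases "y = c") blast+
  qed
  have "\<phi> x \<le> \<phi> c"
  proof (cases "c \<le> x")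
    case True
    show ?thesis
    proof (rule DERIV_nonpos_imp_decreasing_open[where f=\<phi>, OF True])
      fix y assume "c < y" "y < x"
      with deriv[of y] assms(3) show "\<exists>l. (\<phi> has_real_derivative l) (at y) \<and> l \<le> 0"
        by (auto simp: mult_le_0_iff)
    qed (use cont True in auto)
  next
    case False
    show ?thesis
    proof (rule DERIV_nonneg_imp_increasing_open[where f=\<phi>])
      fix y assume "x < y" "y < c"
      with deriv[of y] assms(3) show "\<exists>l. (\<phi> has_real_derivative l) (at y) \<and> 0 \<le> l"
        by (auto simp: mult_le_0_iff)
    qed (use cont False in auto)
  qed
  then show ?thesis using assms(1) by simp
qed

text \<open>Here \<open>(w\<^sup>2)' = 2 w\<^sup>2 Z / (y - c)\<close> has the sign of \<open>c - y\<close>, so \<open>w\<^sup>2\<close> decreases away from \<open>c\<close>.\<close>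

lemma eq_0_if_singular_linear_ode:
  fixes w Z :: "real \<Rightarrow> real"
  assumes "w c = 0" "isCont w c" "\<bar>x - c\<bar> < \<epsilon>"
    and ode: "\<And>y. y \<noteq> c \<Longrightarrow> \<bar>y - c\<bar> < \<epsilon> \<Longrightarrow>
      (w has_real_derivative w y * Z y / (y - c)) (at y) \<and> Z y \<le> 0"
  shows "w x = 0"
proof -
  have "(w x)^2 \<le> 0"
  proof (rule nonpos_if_decreasing_away_from[where \<phi>="\<lambda>y. (w y)^2"])
    fix y assume y: "y \<noteq> c" "\<bar>y - c\<bar> < \<epsilon>"
    have "((\<lambda>y. (w y)^2) has_real_derivative 2 * (w y)^2 * Z y / (y - c)) (at y)"
      by (rule DERIV_cong[OF DERIV_power[where n=2, OF ode[OF y, THEN conjunct1]]])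
        (simp add: power2_eq_square)
    moreover have "2 * (w y)^2 * Z y / (y - c) * (y - c) \<le> 0"
      using y ode[OF y] by (simp add: mult_nonneg_nonpos)
    ultimately show "((\<lambda>y. (w y)^2) has_real_derivative 2 * (w y)^2 * Z y / (y - c)) (at y)
        \<and> 2 * (w y)^2 * Z y / (y - c) * (y - c) \<le> 0" ..
  qed (use assms in \<open>auto intro: continuous_intros\<close>)
  then show ?thesis by simp
qed

text \<open>The factor \<open>Z\<close> tends to \<open>-(\<gamma> - 1) (1 - \<mu>)\<^sup>2 / (s (1 + k2) - (1 - \<mu>))\<^sup>2\<close>; this is
  where \<open>\<gamma> > 1\<close> and the exclusion of the slope \<open>s = (1 - \<mu>) / (1 + k2)\<close> enter.\<close>

lemma F_div_G_diff_eq_factor: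
  assumes "1 < \<gamma>" "\<mu> < 1"
    and f: "(f has_real_derivative s) (at 1)" "f 1 = 0"
    and h: "(h has_real_derivative s) (at 1)" "h 1 = 0"
    and s: "s * (1 + k2 \<gamma> \<mu>) \<noteq> 1 - \<mu>"
  shows "\<exists>Z. (\<forall>\<^sub>F U in at 1. Z U < 0) \<and> (\<forall>U. U \<noteq> 1 \<longrightarrow> G \<gamma> \<mu> (f U) U \<noteq> 0 \<longrightarrow> G \<gamma> \<mu> (h U) U \<noteq> 0 \<longrightarrow>
      F \<gamma> \<mu> (f U) U / G \<gamma> \<mu> (f U) U - F \<gamma> \<mu> (h U) U / G \<gamma> \<mu> (h U) U = (f U - h U) * Z U / (U - 1))"
proof (intro exI conjI allI impI)
  define e where "e = s * (1 + k2 \<gamma> \<mu>) - (1 - \<mu>)"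
  define M where "M U = 2 * f U * h U * (U + k2 \<gamma> \<mu>)
    - U * (U - 1) * (U - \<mu>) * (2 * (f U + h U) - 2 * (U^2 - k1 \<gamma> \<mu> * U + \<mu>))" for U
  define Z where "Z U = M U / (U - 1) / (G \<gamma> \<mu> (f U) U / (U - 1) * (G \<gamma> \<mu> (h U) U / (U - 1)))" for U
  have "(Z \<longlongrightarrow> - (\<gamma> - 1) * (1 - \<mu>)^2 / (e * e)) (at 1)"
    unfolding Z_def M_def e_def using s
    by (intro tendsto_intros cross_term_tendsto[OF f h] G_div_tendsto[OF f] G_div_tendsto[OF h]) auto
  moreover have "- (\<gamma> - 1) * (1 - \<mu>)^2 / (e * e) < 0"
  proof -
    have "e \<noteq> 0" using s by (simp add: e_def)
    then have "0 < e * e" by (metis not_real_square_gt_zero)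
    moreover have "0 < (\<gamma> - 1) * (1 - \<mu>)^2" using assms by simp
    ultimately show ?thesis by (metis divide_neg_pos mult_minus_left neg_less_0_iff_less)
  qed
  ultimately show "\<forall>\<^sub>F U in at 1. Z U < 0" by (rule order_tendstoD)
  fix U assume U: "U \<noteq> 1" "G \<gamma> \<mu> (f U) U \<noteq> 0" "G \<gamma> \<mu> (h U) U \<noteq> 0"
  have rescale: "x * m / (A * B) = x * (m / d / (A / d * (B / d))) / d"
    if "d \<noteq> 0" "A \<noteq> 0" "B \<noteq> 0" for x m A B d :: real
    using that by (simp add: field_simps)
  have "F \<gamma> \<mu> (f U) U / G \<gamma> \<mu> (f U) U - F \<gamma> \<mu> (h U) U / G \<gamma> \<mu> (h U) U
      = (f U - h U) * M U / (G \<gamma> \<mu> (f U) U * G \<gamma> \<mu> (h U) U)"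
    unfolding M_def using U by (intro F_div_G_diff) auto
  also have "\<dots> = (f U - h U) * Z U / (U - 1)"
    unfolding Z_def by (rule rescale) (use U in auto)
  finally show "F \<gamma> \<mu> (f U) U / G \<gamma> \<mu> (f U) U - F \<gamma> \<mu> (h U) U / G \<gamma> \<mu> (h U) U
      = (f U - h U) * Z U / (U - 1)" .
qed

lemma integral_curves_B_eq_near:
  assumes "1 < \<gamma>" "\<mu> < 1"
    and f: "integral_curve_B \<gamma> \<mu> f a b" "(f has_real_derivative s) (at 1)"
    and h: "integral_curve_B \<gamma> \<mu> h a' b'" "(h has_real_derivative s) (at 1)"
    and s: "s * (1 + k2 \<gamma> \<mu>) \<noteq> 1 - \<mu>"
  shows "\<exists>\<epsilon>>0. \<forall>U. \<bar>U - 1\<bar> < \<epsilon> \<longrightarrow> f U = h U"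
proof -
  have f1: "f 1 = 0" and h1: "h 1 = 0" using f h by (auto simp: integral_curve_B_def)
  obtain Z where Z: "\<forall>\<^sub>F U in at 1. Z U < 0" and gap: "\<And>U. U \<noteq> 1 \<Longrightarrow> G \<gamma> \<mu> (f U) U \<noteq> 0 \<Longrightarrow>
      G \<gamma> \<mu> (h U) U \<noteq> 0 \<Longrightarrow> F \<gamma> \<mu> (f U) U / G \<gamma> \<mu> (f U) U - F \<gamma> \<mu> (h U) U / G \<gamma> \<mu> (h U) U
        = (f U - h U) * Z U / (U - 1)"
    using F_div_G_diff_eq_factor[OF assms(1,2) f(2) f1 h(2) h1 s] by blast
  have "\<forall>\<^sub>F U in at 1. Z U < 0
      \<and> ((\<lambda>U. f U - h U) has_real_derivative (f U - h U) * Z U / (U - 1)) (at U)"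
    using Z integral_curve_B_eventually[OF f(1)] integral_curve_B_eventually[OF h(1)]
      eventually_at_in_open[OF open_UNIV UNIV_I]
  proof eventually_elim
    case (elim U)
    then have "((\<lambda>U. f U - h U) has_real_derivative
        F \<gamma> \<mu> (f U) U / G \<gamma> \<mu> (f U) U - F \<gamma> \<mu> (h U) U / G \<gamma> \<mu> (h U) U) (at U)"
      by (intro DERIV_diff) auto
    with elim show ?case using gap[of U] by simp
  qed
  then obtain \<epsilon> where "\<epsilon> > 0" and near: "\<And>U. U \<noteq> 1 \<Longrightarrow> \<bar>U - 1\<bar> < \<epsilon> \<Longrightarrow> Z U < 0
      \<and> ((\<lambda>U. f U - h U) has_real_derivative (f U - h U) * Z U / (U - 1)) (at U)"
    unfolding eventually_at by (auto simp: dist_real_def)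
  have "f U - h U = 0" if "\<bar>U - 1\<bar> < \<epsilon>" for U
  proof (rule eq_0_if_singular_linear_ode[where w="\<lambda>U. f U - h U" and c=1 and Z=Z])
    show "isCont (\<lambda>U. f U - h U) 1" using f h by (intro continuous_intros DERIV_isCont)
    fix y assume "y \<noteq> 1" "\<bar>y - 1\<bar> < \<epsilon>"
    with near show "((\<lambda>U. f U - h U) has_real_derivative (f y - h y) * Z y / (y - 1)) (at y) \<and> Z y \<le> 0"
      by (auto simp: less_imp_le)
  qed (use f1 h1 that in auto)
  then show ?thesis using \<open>\<epsilon> > 0\<close> by auto
qed

section \<open>Existence and smoothness\<close>

definition B_series :: "real \<Rightarrow> real \<Rightarrow> real fps" where
  "B_series \<gamma> \<mu> = singular_ode.solution_series
     (1 + k2 \<gamma> \<mu>) ((\<gamma> - 1) * (1 - \<mu>)) (1 - \<mu>) (2 - \<mu>) (2 - k1 \<gamma> \<mu>)"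

lemma singular_ode_B:
  assumes "1 < \<gamma>" "\<mu> < 1"
  shows "singular_ode (1 + k2 \<gamma> \<mu>) ((\<gamma> - 1) * (1 - \<mu>)) (1 - \<mu>)"
proof
  show "0 < 1 + k2 \<gamma> \<mu>" using assms by (simp add: k2_def add_pos_pos)
qed (use assms in auto)

lemma B_series_conv_radius_pos: "1 < \<gamma> \<Longrightarrow> \<mu> < 1 \<Longrightarrow> 0 < fps_conv_radius (B_series \<gamma> \<mu>)"
  unfolding B_series_def by (rule singular_ode.solution_series_conv_radius_pos[OF singular_ode_B])

lemma B_series_nth:
  assumes "1 < \<gamma>" "\<mu> < 1"
  shows "fps_nth (B_series \<gamma> \<mu>) 0 = 0" "fps_nth (B_series \<gamma> \<mu>) 1 = \<gamma> * (1 - \<mu>) / (1 + k2 \<gamma> \<mu>)"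
proof -
  interpret singular_ode "1 + k2 \<gamma> \<mu>" "(\<gamma> - 1) * (1 - \<mu>)" "1 - \<mu>" "2 - \<mu>" "2 - k1 \<gamma> \<mu>"
    using singular_ode_B[OF assms] .
  show "fps_nth (B_series \<gamma> \<mu>) 0 = 0" by (simp add: B_series_def)
  have "fps_nth (B_series \<gamma> \<mu>) 1 = ((\<gamma> - 1) * (1 - \<mu>) + (1 - \<mu>)) / (1 + k2 \<gamma> \<mu>)"
    by (simp add: B_series_def)
  then show "fps_nth (B_series \<gamma> \<mu>) 1 = \<gamma> * (1 - \<mu>) / (1 + k2 \<gamma> \<mu>)"
    by (simp add: algebra_simps)
qed

lemma B_series_ode:
  assumes "1 < \<gamma>" "\<mu> < 1"
  defines "h \<equiv> \<lambda>U. eval_fps (B_series \<gamma> \<mu>) (U - 1)"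
  shows "\<forall>\<^sub>F U in nhds 1. eval_fps (fps_deriv (B_series \<gamma> \<mu>)) (U - 1) * G \<gamma> \<mu> (h U) U = F \<gamma> \<mu> (h U) U"
proof -
  interpret singular_ode "1 + k2 \<gamma> \<mu>" "(\<gamma> - 1) * (1 - \<mu>)" "1 - \<mu>" "2 - \<mu>" "2 - k1 \<gamma> \<mu>"
    using singular_ode_B[OF assms(1,2)] .
  have "\<forall>\<^sub>F u in nhds 0. eval_fps (fps_deriv (B_series \<gamma> \<mu>)) u * G \<gamma> \<mu> (eval_fps (B_series \<gamma> \<mu>) u) (1 + u)
      = F \<gamma> \<mu> (eval_fps (B_series \<gamma> \<mu>) u) (1 + u)"
    using solution_ode_eventually unfolding B_series_def G_at_1_plus F_at_1_plus
    by eventually_elim (simp add: algebra_simps)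
  moreover have "filterlim (\<lambda>U. U - 1) (nhds 0) (nhds (1::real))"
    using tendsto_diff[OF filterlim_ident tendsto_const, of "1::real" 1] by simp
  ultimately show ?thesis
    unfolding h_def by (auto simp: filterlim_iff)
qed

lemma smooth_integral_curve_B_ex:
  assumes "1 < \<gamma>" "\<mu> < 1"
  shows "\<exists>h a b. integral_curve_B \<gamma> \<mu> h a b
    \<and> (h has_real_derivative \<gamma> * (1 - \<mu>) / (1 + k2 \<gamma> \<mu>)) (at 1) \<and> smooth_on_real {a<..<b} h"
proof -
  define Y where "Y = B_series \<gamma> \<mu>"
  define h where "h U = eval_fps Y (U - 1)" for U
  obtain r where r: "0 < r" "ereal r < fps_conv_radius Y"
    using ereal_dense2[OF B_series_conv_radius_pos[OF assms]] by (auto simp: Y_def)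
  then have ball: "ball 1 r \<subseteq> eball 1 (fps_conv_radius Y)"
    by (intro ball_eball_mono) simp
  have deriv: "(h has_real_derivative eval_fps (fps_deriv Y) (U - 1)) (at U)" if "U \<in> ball 1 r" for U
    unfolding h_def using that ball by (intro has_real_derivative_eval_fps_shift) auto
  have h1: "h 1 = 0" by (simp add: h_def eval_fps_at_0 Y_def B_series_nth[OF assms])
  have slope: "(h has_real_derivative \<gamma> * (1 - \<mu>) / (1 + k2 \<gamma> \<mu>)) (at 1)"
    using deriv[of 1] r B_series_nth(2)[OF assms] by (simp add: eval_fps_at_0 Y_def One_nat_def)
  from B_series_ode[OF assms]
  have ode: "\<forall>\<^sub>F U in at 1. eval_fps (fps_deriv Y) (U - 1) * G \<gamma> \<mu> (h U) U = F \<gamma> \<mu> (h U) U"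
    by (simp add: eventually_nhds_conv_at h_def Y_def)
  have "0 < k2 \<gamma> \<mu>" using assms by (simp add: k2_def)
  then have "\<gamma> * (1 - \<mu>) / (1 + k2 \<gamma> \<mu>) * (1 + k2 \<gamma> \<mu>) - (1 - \<mu>) = (\<gamma> - 1) * (1 - \<mu>)"
    by (simp add: field_simps)
  then have "((\<lambda>U. G \<gamma> \<mu> (h U) U / (U - 1)) \<longlongrightarrow> (\<gamma> - 1) * (1 - \<mu>)) (at 1)"
    using G_div_tendsto[OF slope h1, where \<gamma>=\<gamma> and \<mu>=\<mu>] by simp
  then have "\<forall>\<^sub>F U in at 1. 0 < G \<gamma> \<mu> (h U) U / (U - 1)"
    using assms by (intro order_tendstoD) auto
  moreover have "\<forall>\<^sub>F U in at 1. U \<in> ball 1 r - {1}"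
    using r by (intro eventually_at_in_open) auto
  ultimately have curve: "\<forall>\<^sub>F U in at 1. G \<gamma> \<mu> (h U) U \<noteq> 0
      \<and> (h has_real_derivative F \<gamma> \<mu> (h U) U / G \<gamma> \<mu> (h U) U) (at U)"
    using ode
  proof eventually_elim
    case (elim U)
    then have "F \<gamma> \<mu> (h U) U / G \<gamma> \<mu> (h U) U = eval_fps (fps_deriv Y) (U - 1)"
      by (auto simp: divide_eq_eq)
    with elim deriv[of U] show ?case by auto
  qed
  then obtain d where "0 < d" "d \<le> r" "integral_curve_B \<gamma> \<mu> h (1 - d) (1 + d)"
    using integral_curve_B_if_eventually[OF h1 r(1) curve] by blast
  moreover have "smooth_on_real {1 - d<..<1 + d} h"
    unfolding h_def using ball \<open>d \<le> r\<close>
    by (intro smooth_on_real_eval_fps_shift) (auto simp: dist_real_def abs_less_iff)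
  ultimately show ?thesis using slope by blast
qed

lemma integral_curve_B_zero:
  assumes "0 < \<mu>" "\<mu> < 1"
  shows "integral_curve_B \<gamma> \<mu> (\<lambda>_. 0) \<mu> 2"
  unfolding integral_curve_B_def
proof (intro conjI ballI)
  fix U assume "U \<in> {\<mu><..<2} - {1}"
  then show "G \<gamma> \<mu> 0 U \<noteq> 0" using assms by (auto simp: G_def)
qed (use assms in \<open>auto simp: F_def\<close>)

lemma smooth_on_real_const: "smooth_on_real S (\<lambda>_. c)"
proof -
  have const: "\<exists>d. (deriv ^^ n) (\<lambda>_::real. c) = (\<lambda>_. d)" for n
    by (induction n) auto
  show ?thesis unfolding smooth_on_real_def
  proof (intro allI ballI)
    fix n x
    obtain d where "(deriv ^^ n) (\<lambda>_::real. c) = (\<lambda>_. d)" using const by blast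
    then show "(deriv ^^ n) (\<lambda>_. c) differentiable at x" by simp
  qed
qed

theorem lemma4p5:
  fixes \<gamma> \<mu> :: real
  assumes "1 < \<gamma>" and "\<gamma> < 3" and "0 < \<mu>" and "\<mu> < 1"
  shows "(0::real) \<noteq> \<gamma> * (1 - \<mu>) / (1 + k2 \<gamma> \<mu>)
    \<and> (\<forall>c \<in> {0, \<gamma> * (1 - \<mu>) / (1 + k2 \<gamma> \<mu>)}.
         \<exists>h a b. integral_curve_B \<gamma> \<mu> h a b \<and> (h has_real_derivative c) (at 1)
           \<and> smooth_on_real {a<..<b} h
           \<and> (\<forall>g a' b'. integral_curve_B \<gamma> \<mu> g a' b' \<and> (g has_real_derivative c) (at 1)
                 \<longrightarrow> (\<exists>\<epsilon>>0. \<forall>U. \<bar>U - 1\<bar> < \<epsilon> \<longrightarrow> g U = h U)))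
    \<and> (\<exists>a b. integral_curve_B \<gamma> \<mu> (\<lambda>_. 0) a b)
    \<and> (\<forall>g a b. integral_curve_B \<gamma> \<mu> g a b \<and> (g has_real_derivative 0) (at 1)
                 \<longrightarrow> (\<exists>\<epsilon>>0. \<forall>U. \<bar>U - 1\<bar> < \<epsilon> \<longrightarrow> g U = 0))"
proof -
  define c2 where "c2 = \<gamma> * (1 - \<mu>) / (1 + k2 \<gamma> \<mu>)"
  have "0 < k2 \<gamma> \<mu>" using assms by (simp add: k2_def)
  then have c2: "c2 \<noteq> 0" "c2 * (1 + k2 \<gamma> \<mu>) \<noteq> 1 - \<mu>" using assms by (auto simp: c2_def)
  have zero: "integral_curve_B \<gamma> \<mu> (\<lambda>_. 0) \<mu> 2" "smooth_on_real {\<mu><..<2} (\<lambda>_. 0)"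
    using integral_curve_B_zero[OF assms(3,4)] smooth_on_real_const by auto
  obtain h a b where h: "integral_curve_B \<gamma> \<mu> h a b" "(h has_real_derivative c2) (at 1)"
    "smooth_on_real {a<..<b} h"
    using smooth_integral_curve_B_ex[OF assms(1,4)] unfolding c2_def by blast
  have unique: "\<exists>\<epsilon>>0. \<forall>U. \<bar>U - 1\<bar> < \<epsilon> \<longrightarrow> g U = f U"
    if "s \<in> {0, c2}" "integral_curve_B \<gamma> \<mu> f a b" "(f has_real_derivative s) (at 1)"
      "integral_curve_B \<gamma> \<mu> g a' b'" "(g has_real_derivative s) (at 1)" for s f g a b a' b'
    using integral_curves_B_eq_near[OF assms(1,4) that(4,5) that(2,3)] that(1) c2 assms by auto
  show ?thesis
    unfolding c2_def[symmetric]
  proof (intro conjI ballI)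
    fix s assume s: "s \<in> {0, c2}"
    have "\<exists>h a b. integral_curve_B \<gamma> \<mu> h a b \<and> (h has_real_derivative s) (at 1)
      \<and> smooth_on_real {a<..<b} h"
    proof (cases "s = 0")
      case True
      then show ?thesis using zero by (intro exI[of _ "\<lambda>_. 0"] exI[of _ \<mu>] exI[of _ 2]) auto
    qed (use s h in auto)
    then show "\<exists>h a b. integral_curve_B \<gamma> \<mu> h a b \<and> (h has_real_derivative s) (at 1)
      \<and> smooth_on_real {a<..<b} h
      \<and> (\<forall>g a' b'. integral_curve_B \<gamma> \<mu> g a' b' \<and> (g has_real_derivative s) (at 1)
          \<longrightarrow> (\<exists>\<epsilon>>0. \<forall>U. \<bar>U - 1\<bar> < \<epsilon> \<longrightarrow> g U = h U))"
      using unique[OF s] by blast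
  qed (use c2 zero unique[of 0 "\<lambda>_. 0" \<mu> 2] in auto)
qed

end
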